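(* Let $G$ be a factor graph with evidence $\mathbf{E}$ in which all factors are known. Then the colour passing (CP) algorithm and the LIFG algorithm (for any threshold $\theta\in[0,1]$) output identical groupings of random variables and of factors, respectively.
   Context: A factor graph (FG) is a bipartite undirected graph with variable nodes (random variables, each with a finite range $\mathcal R(R)$, possibly observed as evidence) and factor nodes; a factor $f$ has an ordered argument list of random variables (its neighbours) and, if known, a potential function mapping each joint assignment of its arguments to a positive real; an unknown factor is one whose potential mapping is not known. $\mathrm{Ne}_G(v)$ denotes the neighbours of node $v$. The 2-step neighbourhood of a factor $f$ is $\mathrm{Ne}^2(f)=\mathrm{Ne}_G(f)\cup\{f' : \exists R\in \mathrm{Ne}_G(f),\ f'\in\mathrm{Ne}_G(R)\}$. For factors $f_i,f_j$, their induced 2-step neighbourhoods are symmetric if $|\mathrm{Ne}_G(f_i)|=|\mathrm{Ne}_G(f_j)|$ and there is a bijection $\mathrm{Ne}_G(f_i)\to\mathrm{Ne}_G(f_j)$ mapping each $R_k$ to some $R_\ell$ with identical evidence, equal ranges, and $|\mathrm{Ne}_G(R_k)|=|\mathrm{Ne}_G(R_\ell)|$; $f_i\approx f_j$ (possibly identical) if their induced 2-step neighbourhoods are symmetric and either one of them is unknown or both have the same potentials. The colour passing (CP) algorithm: random variables are initially coloured so that variables with identical range and identical evidence share a colour; factors are initially coloured so that factors with identical potentials share a colour (or given initial colours). Then repeatedly: each factor receives the colours of its argument variables (in order) and is recoloured according to this signature together with its own colour; each variable receives the pairs (colour of neighbouring factor, its position in that factor's argument list) and is recoloured according to this signature together with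 its own colour; iterate until the colour-class partitions no longer change, and group variables and factors by final colour. The LIFG algorithm, with input $G,\mathbf{E}$ and threshold $\theta\in[0,1]$: (1) assign each known factor a colour based on its potentials; (2) assign each unknown factor a unique colour; (3) for each unknown factor $f_i$, set $C_{f_i}=\emptyset$, and for each factor $f_j\neq f_i$ with $f_i\approx f_j$: if $f_j$ is unknown assign $f_j$ the colour of $f_i$, otherwise add $f_j$ to $C_{f_i}$; (4) for each $C_{f_i}$, let $C^\ell_{f_i}$ be a maximal subset of $C_{f_i}$ whose elements are pairwise possibly identical, and if $|C^\ell_{f_i}|/|C_{f_i}|\ge\theta$ assign all factors in $C^\ell_{f_i}$ the colour of $f_i$; (5) run CP on $G$ with these factor colours and evidence $\mathbf{E}$, and output the resulting grouping. *)

theory Defs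
  imports Complex_Main "HOL-Library.Multiset"
begin

text \<open>A factor graph: finite set of random variables, finite set of factors,
  each factor with an ordered argument list, each variable with a finite range,
  each factor with an optional potential (None = unknown factor).
  A potential maps a joint assignment (list of values, one per argument)
  to a positive real; by convention it is 0 outside the joint range, so that two
  potentials are identical iff they are equal as functions.\<close>

record ('v, 'f, 'a) fgraph =
  fvars :: "'v set"
  ffacs :: "'f set"
  fargs :: "'f \<Rightarrow> 'v list"
  frng  :: "'v \<Rightarrow> 'a set"
  fpot  :: "'f \<Rightarrow> ('a list \<Rightarrow> real) option"

type_synonym ('v, 'a) evidence = "'v \<Rightarrow> 'a option"

definition joint_assignments :: "('v, 'f, 'a) fgraph \<Rightarrow> 'f \<Rightarrow> 'a list set" where
  "joint_assignments G f = {xs. length xs = length (fargs G f) \<and>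
      (\<forall>i < length xs. xs ! i \<in> frng G (fargs G f ! i))}"

definition wf_fg :: "('v, 'f, 'a) fgraph \<Rightarrow> ('v, 'a) evidence \<Rightarrow> bool" where
  "wf_fg G E \<longleftrightarrow>
     finite (fvars G) \<and> finite (ffacs G) \<and>
     (\<forall>v \<in> fvars G. finite (frng G v) \<and> frng G v \<noteq> {}) \<and>
     (\<forall>f \<in> ffacs G. set (fargs G f) \<subseteq> fvars G \<and> distinct (fargs G f)) \<and>
     (\<forall>f \<in> ffacs G. \<forall>p. fpot G f = Some p \<longrightarrow>
        (\<forall>xs. (xs \<in> joint_assignments G f \<longrightarrow> p xs > 0) \<and>
              (xs \<notin> joint_assignments G f \<longrightarrow> p xs = 0))) \<and>
     (\<forall>v \<in> fvars G. \<forall>x. E v = Some x \<longrightarrow> x \<in> frng G v) \<and>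
     (\<forall>v. v \<notin> fvars G \<longrightarrow> E v = None)"

definition ne_fac :: "('v, 'f, 'a) fgraph \<Rightarrow> 'f \<Rightarrow> 'v set" where
  "ne_fac G f = set (fargs G f)"

definition ne_var :: "('v, 'f, 'a) fgraph \<Rightarrow> 'v \<Rightarrow> 'f set" where
  "ne_var G R = {f \<in> ffacs G. R \<in> set (fargs G f)}"

text \<open>Colourings are represented by the induced "same colour" relations.
  A CP state is a pair (relation on variables, relation on factors).\<close>

type_synonym ('v, 'f) cstate = "('v \<Rightarrow> 'v \<Rightarrow> bool) \<times> ('f \<Rightarrow> 'f \<Rightarrow> bool)"

definition fclass :: "('v, 'f, 'a) fgraph \<Rightarrow> ('f \<Rightarrow> 'f \<Rightarrow> bool) \<Rightarrow> 'f \<Rightarrow> 'f set" where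
  "fclass G RF f = {g \<in> ffacs G. RF f g}"

text \<open>Message received by a variable: multiset of pairs
  (colour of neighbouring factor, position of the variable in its argument list).\<close>

definition var_sig :: "('v, 'f, 'a) fgraph \<Rightarrow> ('f \<Rightarrow> 'f \<Rightarrow> bool) \<Rightarrow> 'v \<Rightarrow> ('f set \<times> nat) multiset" where
  "var_sig G RF v = image_mset (\<lambda>(f, i). (fclass G RF f, i))
      (mset_set {(f, i). f \<in> ffacs G \<and> i < length (fargs G f) \<and> fargs G f ! i = v})"

definition cp_step :: "('v, 'f, 'a) fgraph \<Rightarrow> ('v, 'f) cstate \<Rightarrow> ('v, 'f) cstate" where
  "cp_step G S =
     (let RV = fst S; RF = snd S;
          RF' = (\<lambda>f g. RF f g \<and> length (fargs G f) = length (fargs G g) \<and>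
                   (\<forall>i < length (fargs G f). RV (fargs G f ! i) (fargs G g ! i)));
          RV' = (\<lambda>v w. RV v w \<and> var_sig G RF' v = var_sig G RF' w)
      in (RV', RF'))"

definition partition_of :: "'x set \<Rightarrow> ('x \<Rightarrow> 'x \<Rightarrow> bool) \<Rightarrow> 'x set set" where
  "partition_of A R = (\<lambda>x. {y \<in> A. R x y}) ` A"

definition groupings :: "('v, 'f, 'a) fgraph \<Rightarrow> ('v, 'f) cstate \<Rightarrow> 'v set set \<times> 'f set set" where
  "groupings G S = (partition_of (fvars G) (fst S), partition_of (ffacs G) (snd S))"

definition cp_init :: "('v, 'f, 'a) fgraph \<Rightarrow> ('v, 'a) evidence \<Rightarrow> ('f \<Rightarrow> 'c) \<Rightarrow> ('v, 'f) cstate" where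
  "cp_init G E colF =
     ((\<lambda>v w. frng G v = frng G w \<and> E v = E w), (\<lambda>f g. colF f = colF g))"

definition colour_passing ::
  "('v, 'f, 'a) fgraph \<Rightarrow> ('v, 'a) evidence \<Rightarrow> ('f \<Rightarrow> 'c) \<Rightarrow> 'v set set \<times> 'f set set" where
  "colour_passing G E colF =
     (let st = (\<lambda>k. (cp_step G ^^ k) (cp_init G E colF));
          n = (LEAST k. groupings G (st (Suc k)) = groupings G (st k))
      in groupings G (st n))"

definition CP :: "('v, 'f, 'a) fgraph \<Rightarrow> ('v, 'a) evidence \<Rightarrow> 'v set set \<times> 'f set set" where
  "CP G E = colour_passing G E (fpot G)"

definition sym_2step :: "('v, 'f, 'a) fgraph \<Rightarrow> ('v, 'a) evidence \<Rightarrow> 'f \<Rightarrow> 'f \<Rightarrow> bool" where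
  "sym_2step G E fi fj \<longleftrightarrow>
     card (ne_fac G fi) = card (ne_fac G fj) \<and>
     (\<exists>h. bij_betw h (ne_fac G fi) (ne_fac G fj) \<and>
        (\<forall>R \<in> ne_fac G fi. E (h R) = E R \<and> frng G (h R) = frng G R \<and>
                            card (ne_var G R) = card (ne_var G (h R))))"

definition poss_ident :: "('v, 'f, 'a) fgraph \<Rightarrow> ('v, 'a) evidence \<Rightarrow> 'f \<Rightarrow> 'f \<Rightarrow> bool" where
  "poss_ident G E fi fj \<longleftrightarrow> sym_2step G E fi fj \<and>
     (fpot G fi = None \<or> fpot G fj = None \<or> fpot G fi = fpot G fj)"

datatype ('f, 'a) lcolour = PotCol "'a list \<Rightarrow> real" | UniqCol 'f

definition unknown_facs :: "('v, 'f, 'a) fgraph \<Rightarrow> 'f set" where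
  "unknown_facs G = {f \<in> ffacs G. fpot G f = None}"

definition cand_set :: "('v, 'f, 'a) fgraph \<Rightarrow> ('v, 'a) evidence \<Rightarrow> 'f \<Rightarrow> 'f set" where
  "cand_set G E fi = {fj \<in> ffacs G. fj \<noteq> fi \<and> poss_ident G E fi fj \<and> fpot G fj \<noteq> None}"

definition lifg_col0 :: "('v, 'f, 'a) fgraph \<Rightarrow> 'f \<Rightarrow> ('f, 'a) lcolour" where
  "lifg_col0 G f = (case fpot G f of Some p \<Rightarrow> PotCol p | None \<Rightarrow> UniqCol f)"

definition lifg_step3 :: "('v, 'f, 'a) fgraph \<Rightarrow> ('v, 'a) evidence \<Rightarrow>
    ('f \<Rightarrow> ('f, 'a) lcolour) \<Rightarrow> 'f \<Rightarrow> ('f \<Rightarrow> ('f, 'a) lcolour)" where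
  "lifg_step3 G E col fi =
     (\<lambda>fj. if fj \<in> ffacs G \<and> fj \<noteq> fi \<and> poss_ident G E fi fj \<and> fpot G fj = None
           then col fi else col fj)"

definition lifg_step4 :: "('v, 'f, 'a) fgraph \<Rightarrow> ('v, 'a) evidence \<Rightarrow> real \<Rightarrow> ('f \<Rightarrow> 'f set) \<Rightarrow>
    ('f \<Rightarrow> ('f, 'a) lcolour) \<Rightarrow> 'f \<Rightarrow> ('f \<Rightarrow> ('f, 'a) lcolour)" where
  "lifg_step4 G E \<theta> sel col fi =
     (if real (card (sel fi)) / real (card (cand_set G E fi)) \<ge> \<theta>
      then (\<lambda>fj. if fj \<in> sel fi then col fi else col fj) else col)"

definition valid_order :: "('v, 'f, 'a) fgraph \<Rightarrow> 'f list \<Rightarrow> bool" where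
  "valid_order G ord \<longleftrightarrow> distinct ord \<and> set ord = unknown_facs G"

definition valid_sel :: "('v, 'f, 'a) fgraph \<Rightarrow> ('v, 'a) evidence \<Rightarrow> ('f \<Rightarrow> 'f set) \<Rightarrow> bool" where
  "valid_sel G E sel \<longleftrightarrow> (\<forall>fi \<in> unknown_facs G.
      sel fi \<subseteq> cand_set G E fi \<and> pairwise (poss_ident G E) (sel fi) \<and>
      (\<forall>S \<subseteq> cand_set G E fi. pairwise (poss_ident G E) S \<longrightarrow> card S \<le> card (sel fi)))"

definition LIFG :: "('v, 'f, 'a) fgraph \<Rightarrow> ('v, 'a) evidence \<Rightarrow> real \<Rightarrow> 'f list \<Rightarrow> ('f \<Rightarrow> 'f set)
    \<Rightarrow> 'v set set \<times> 'f set set" where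
  "LIFG G E \<theta> ord sel =
     (let c3 = foldl (lifg_step3 G E) (lifg_col0 G) ord;
          c4 = foldl (lifg_step4 G E \<theta> sel) c3 ord
      in colour_passing G E c4)"

end

theory Submission
  imports Defs
begin

text \<open>Colour passing only ever compares factor colours, so its output depends on the
  initial factor colouring only through the equivalence it induces on the factors. With
  no unknown factors, LIFG skips steps (3) and (4) and starts CP from a colouring whose
  classes are exactly the classes of equal potentials, i.e. from the colouring plain CP
  uses.\<close>

definition cstate_eq_on_facs :: "('v, 'f, 'a) fgraph \<Rightarrow> ('v, 'f) cstate \<Rightarrow> ('v, 'f) cstate \<Rightarrow> bool" where
  "cstate_eq_on_facs G S T \<longleftrightarrow>
     fst S = fst T \<and> (\<forall>f\<in>ffacs G. \<forall>g\<in>ffacs G. snd S f g = snd T f g)"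

lemma var_sig_cong:
  assumes "\<forall>f\<in>ffacs G. \<forall>g\<in>ffacs G. RF f g = RF' f g"
  shows "var_sig G RF v = var_sig G RF' v"
  unfolding var_sig_def
proof (rule image_mset_cong)
  fix x
  assume "x \<in># mset_set {(f, i). f \<in> ffacs G \<and> i < length (fargs G f) \<and> fargs G f ! i = v}"
  then have "fst x \<in> ffacs G"
    by (auto simp: count_mset_set' simp flip: count_greater_zero_iff split: if_splits)
  then show "(case x of (f, i) \<Rightarrow> (fclass G RF f, i)) = (case x of (f, i) \<Rightarrow> (fclass G RF' f, i))"
    using assms by (cases x) (auto simp: fclass_def)
qed

lemma cp_step_cong:
  assumes "cstate_eq_on_facs G S T"
  shows "cstate_eq_on_facs G (cp_step G S) (cp_step G T)"
proof -
  obtain RV RF RF' where S: "S = (RV, RF)" and T: "T = (RV, RF')"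
    and RF: "\<forall>f\<in>ffacs G. \<forall>g\<in>ffacs G. RF f g = RF' f g"
    using assms by (cases S, cases T) (auto simp: cstate_eq_on_facs_def)
  define refine where "refine R f g \<longleftrightarrow> R f g \<and> length (fargs G f) = length (fargs G g) \<and>
      (\<forall>i < length (fargs G f). RV (fargs G f ! i) (fargs G g ! i))" for R f g
  have refined: "\<forall>f\<in>ffacs G. \<forall>g\<in>ffacs G. refine RF f g = refine RF' f g"
    using RF by (simp add: refine_def)
  then have "var_sig G (refine RF) v = var_sig G (refine RF') v" for v
    by (rule var_sig_cong)
  with refined show ?thesis
    unfolding cstate_eq_on_facs_def cp_step_def S T Let_def refine_def[abs_def]
    by simp
qed

lemma cp_iter_cong:
  "cstate_eq_on_facs G S T \<Longrightarrow>
     cstate_eq_on_facs G ((cp_step G ^^ k) S) ((cp_step G ^^ k) T)"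
  by (induction k) (simp_all add: cp_step_cong)

lemma groupings_cong: "cstate_eq_on_facs G S T \<Longrightarrow> groupings G S = groupings G T"
  unfolding cstate_eq_on_facs_def groupings_def partition_of_def
  by (auto intro!: image_cong)

lemma colour_passing_cong:
  assumes "\<forall>f\<in>ffacs G. \<forall>g\<in>ffacs G. (c f = c g) = (c' f = c' g)"
  shows "colour_passing G E c = colour_passing G E c'"
proof -
  have "cstate_eq_on_facs G (cp_init G E c) (cp_init G E c')"
    using assms by (simp add: cstate_eq_on_facs_def cp_init_def)
  then have "groupings G ((cp_step G ^^ k) (cp_init G E c)) =
      groupings G ((cp_step G ^^ k) (cp_init G E c'))" for k
    by (intro groupings_cong cp_iter_cong)
  then show ?thesis
    unfolding colour_passing_def Let_def by presburger
qed

lemma lifg_col0_eq_iff: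
  assumes "fpot G f \<noteq> None" and "fpot G g \<noteq> None"
  shows "lifg_col0 G f = lifg_col0 G g \<longleftrightarrow> fpot G f = fpot G g"
  using assms by (auto simp: lifg_col0_def)

lemma LIFG_no_unknown_facs:
  assumes "unknown_facs G = {}" and "valid_order G ord"
  shows "LIFG G E \<theta> ord sel = colour_passing G E (lifg_col0 G)"
proof -
  have "ord = []"
    using assms by (simp add: valid_order_def)
  then show ?thesis
    by (simp add: LIFG_def)
qed

theorem mainTheorem2:
  fixes G :: "('v, 'f, 'a) fgraph" and E :: "('v, 'a) evidence" and \<theta> :: real
    and ord :: "'f list" and sel :: "'f \<Rightarrow> 'f set"
  assumes "wf_fg G E"
    and "\<forall>f \<in> ffacs G. fpot G f \<noteq> None"
    and "0 \<le> \<theta>" and "\<theta> \<le> 1"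
    and "valid_order G ord" and "valid_sel G E sel"
  shows "LIFG G E \<theta> ord sel = CP G E"
proof -
  have "unknown_facs G = {}"
    using assms(2) by (auto simp: unknown_facs_def)
  then have "LIFG G E \<theta> ord sel = colour_passing G E (lifg_col0 G)"
    using assms(5) by (rule LIFG_no_unknown_facs)
  also have "\<dots> = colour_passing G E (fpot G)"
    using assms(2) by (intro colour_passing_cong) (simp add: lifg_col0_eq_iff)
  finally show ?thesis
    unfolding CP_def .
qed

end
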